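(* Let $\mathfrak m_+,\mathfrak m_-$ be Lie subalgebras of $\mathfrak g$ with $\mathfrak l_r\subset\mathfrak m_+\oplus\mathfrak m_-$, and $\mathfrak t=\mathfrak m_+\cap\mathfrak m_-$. Then the following are equivalent: (i) $\mathfrak m_+\oplus\mathfrak m_-\subset\mathfrak n_{\mathfrak g\oplus\mathfrak g}(\mathfrak l_r)$ (the normalizer of $\mathfrak l_r$ in $\mathfrak g\oplus\mathfrak g$); (ii) $[\mathfrak m_+,\mathfrak f_+]\subset\mathfrak f_+^\perp$ and $[\mathfrak m_-,\mathfrak f_-]\subset\mathfrak f_-^\perp$; (iii) $\delta_r(x)=0$ for all $x\in\mathfrak t$.
   Context: $\mathfrak g$ is a real or complex Lie algebra and $r=\sum_ix_i\otimes y_i\in\mathfrak g\otimes\mathfrak g$ a factorizable quasitriangular $r$-matrix: $r+r^{21}$ is ad-invariant and nondegenerate and the classical Yang–Baxter equation holds. $\delta_r(x)=\mathrm{ad}_x(r)$. $r_+(\xi)=\sum_i\langle\xi,x_i\rangle y_i$, $r_-(\xi)=-\sum_i\langle\xi,y_i\rangle x_i$ ($\xi\in\mathfrak g^*$); $\langle a,b\rangle_{\mathfrak g}=\langle(r_+-r_-)^{-1}a,b\rangle$, $\perp$ orthogonality; $r^\flat_\pm=r_\pm\circ(r_+-r_-)^{-1}$; $\mathfrak f_\pm=\mathrm{Im}\,r_\pm$; $\mathfrak l_r=\{(r^\flat_+(x),r^\flat_-(x)):x\in\mathfrak g\}\subset\mathfrak g\oplus\mathfrak g$ (direct product Lie algebra).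 *)

theory Defs
  imports Complex_Main
begin

definition lie_algebra :: "('k::field \<Rightarrow> 'g::ab_group_add \<Rightarrow> 'g) \<Rightarrow> ('g \<Rightarrow> 'g \<Rightarrow> 'g) \<Rightarrow> bool" where
  "lie_algebra sc br \<longleftrightarrow> vector_space sc
     \<and> (\<forall>y. Vector_Spaces.linear sc sc (\<lambda>x. br x y))
     \<and> (\<forall>x. Vector_Spaces.linear sc sc (\<lambda>y. br x y))
     \<and> (\<forall>x. br x x = 0)
     \<and> (\<forall>x y z. br x (br y z) + br y (br z x) + br z (br x y) = 0)"

definition lie_subalgebra :: "('k::field \<Rightarrow> 'g::ab_group_add \<Rightarrow> 'g) \<Rightarrow> ('g \<Rightarrow> 'g \<Rightarrow> 'g) \<Rightarrow> 'g set \<Rightarrow> bool" where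
  "lie_subalgebra sc br M \<longleftrightarrow> module.subspace sc M \<and> (\<forall>a\<in>M. \<forall>b\<in>M. br a b \<in> M)"

definition dual :: "('k::field \<Rightarrow> 'g::ab_group_add \<Rightarrow> 'g) \<Rightarrow> ('g \<Rightarrow> 'k) set" where
  "dual sc = {\<xi>. Vector_Spaces.linear sc (*) \<xi>}"

text \<open>Tensors in g\<otimes>g are represented by finite lists of pure tensors a\<otimes>b; such a
  tensor is zero iff it is killed by every pair of linear functionals.\<close>
definition tensor2_zero :: "('k::field \<Rightarrow> 'g::ab_group_add \<Rightarrow> 'g) \<Rightarrow> ('g \<times> 'g) list \<Rightarrow> bool" where
  "tensor2_zero sc t \<longleftrightarrow> (\<forall>\<phi>\<in>dual sc. \<forall>\<psi>\<in>dual sc. (\<Sum>(a,b)\<leftarrow>t. \<phi> a * \<psi> b) = 0)"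

definition tensor3_zero :: "('k::field \<Rightarrow> 'g::ab_group_add \<Rightarrow> 'g) \<Rightarrow> ('g \<times> 'g \<times> 'g) list \<Rightarrow> bool" where
  "tensor3_zero sc t \<longleftrightarrow> (\<forall>\<phi>\<in>dual sc. \<forall>\<psi>\<in>dual sc. \<forall>\<chi>\<in>dual sc.
      (\<Sum>(a,b,c)\<leftarrow>t. \<phi> a * \<psi> b * \<chi> c) = 0)"

definition ad2 :: "('g \<Rightarrow> 'g \<Rightarrow> 'g) \<Rightarrow> 'g \<Rightarrow> ('g \<times> 'g) list \<Rightarrow> ('g \<times> 'g) list" where
  "ad2 br x t = concat (map (\<lambda>(a,b). [(br x a, b), (a, br x b)]) t)"

definition flip21 :: "('g \<times> 'g) list \<Rightarrow> ('g \<times> 'g) list" where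
  "flip21 t = map (\<lambda>(a,b). (b,a)) t"

definition delta_zero :: "('k::field \<Rightarrow> 'g::ab_group_add \<Rightarrow> 'g) \<Rightarrow> ('g \<Rightarrow> 'g \<Rightarrow> 'g) \<Rightarrow> ('g \<times> 'g) list \<Rightarrow> 'g \<Rightarrow> bool" where
  "delta_zero sc br r x \<longleftrightarrow> tensor2_zero sc (ad2 br x r)"

text \<open>CYBE: [r12,r13] + [r12,r23] + [r13,r23] = 0 for r = sum x_i \<otimes> y_i.\<close>
definition cybe :: "('k::field \<Rightarrow> 'g::ab_group_add \<Rightarrow> 'g) \<Rightarrow> ('g \<Rightarrow> 'g \<Rightarrow> 'g) \<Rightarrow> ('g \<times> 'g) list \<Rightarrow> bool" where
  "cybe sc br r \<longleftrightarrow> tensor3_zero sc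
     (concat (map (\<lambda>(xi,yi). concat (map (\<lambda>(xj,yj).
        [(br xi xj, yi, yj), (xi, br yi xj, yj), (xi, xj, br yi yj)]) r)) r))"

definition r_plus :: "('k::field \<Rightarrow> 'g::ab_group_add \<Rightarrow> 'g) \<Rightarrow> ('g \<times> 'g) list \<Rightarrow> ('g \<Rightarrow> 'k) \<Rightarrow> 'g" where
  "r_plus sc r \<xi> = (\<Sum>(x,y)\<leftarrow>r. sc (\<xi> x) y)"

definition r_minus :: "('k::field \<Rightarrow> 'g::ab_group_add \<Rightarrow> 'g) \<Rightarrow> ('g \<times> 'g) list \<Rightarrow> ('g \<Rightarrow> 'k) \<Rightarrow> 'g" where
  "r_minus sc r \<xi> = - (\<Sum>(x,y)\<leftarrow>r. sc (\<xi> y) x)"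

definition r_diff :: "('k::field \<Rightarrow> 'g::ab_group_add \<Rightarrow> 'g) \<Rightarrow> ('g \<times> 'g) list \<Rightarrow> ('g \<Rightarrow> 'k) \<Rightarrow> 'g" where
  "r_diff sc r \<xi> = r_plus sc r \<xi> - r_minus sc r \<xi>"

definition r_diff_inv :: "('k::field \<Rightarrow> 'g::ab_group_add \<Rightarrow> 'g) \<Rightarrow> ('g \<times> 'g) list \<Rightarrow> 'g \<Rightarrow> ('g \<Rightarrow> 'k)" where
  "r_diff_inv sc r = inv_into (dual sc) (r_diff sc r)"

definition factorizable_qt :: "('k::field \<Rightarrow> 'g::ab_group_add \<Rightarrow> 'g) \<Rightarrow> ('g \<Rightarrow> 'g \<Rightarrow> 'g) \<Rightarrow> ('g \<times> 'g) list \<Rightarrow> bool" where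
  "factorizable_qt sc br r \<longleftrightarrow>
     (\<forall>x. tensor2_zero sc (ad2 br x (r @ flip21 r)))
     \<and> bij_betw (r_diff sc r) (dual sc) UNIV
     \<and> cybe sc br r"

definition form_g :: "('k::field \<Rightarrow> 'g::ab_group_add \<Rightarrow> 'g) \<Rightarrow> ('g \<times> 'g) list \<Rightarrow> 'g \<Rightarrow> 'g \<Rightarrow> 'k" where
  "form_g sc r a b = r_diff_inv sc r a b"

definition perp :: "('k::field \<Rightarrow> 'g::ab_group_add \<Rightarrow> 'g) \<Rightarrow> ('g \<times> 'g) list \<Rightarrow> 'g set \<Rightarrow> 'g set" where
  "perp sc r S = {a. \<forall>b\<in>S. form_g sc r a b = 0}"

definition r_flat_plus :: "('k::field \<Rightarrow> 'g::ab_group_add \<Rightarrow> 'g) \<Rightarrow> ('g \<times> 'g) list \<Rightarrow> 'g \<Rightarrow> 'g" where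
  "r_flat_plus sc r x = r_plus sc r (r_diff_inv sc r x)"

definition r_flat_minus :: "('k::field \<Rightarrow> 'g::ab_group_add \<Rightarrow> 'g) \<Rightarrow> ('g \<times> 'g) list \<Rightarrow> 'g \<Rightarrow> 'g" where
  "r_flat_minus sc r x = r_minus sc r (r_diff_inv sc r x)"

definition f_plus :: "('k::field \<Rightarrow> 'g::ab_group_add \<Rightarrow> 'g) \<Rightarrow> ('g \<times> 'g) list \<Rightarrow> 'g set" where
  "f_plus sc r = r_plus sc r ` dual sc"

definition f_minus :: "('k::field \<Rightarrow> 'g::ab_group_add \<Rightarrow> 'g) \<Rightarrow> ('g \<times> 'g) list \<Rightarrow> 'g set" where
  "f_minus sc r = r_minus sc r ` dual sc"

definition l_r :: "('k::field \<Rightarrow> 'g::ab_group_add \<Rightarrow> 'g) \<Rightarrow> ('g \<times> 'g) list \<Rightarrow> ('g \<times> 'g) set" where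
  "l_r sc r = {(r_flat_plus sc r x, r_flat_minus sc r x) | x. True}"

definition normalizer2 :: "('g \<Rightarrow> 'g \<Rightarrow> 'g) \<Rightarrow> ('g \<times> 'g) set \<Rightarrow> ('g \<times> 'g) set" where
  "normalizer2 br L = {(a,b). \<forall>(u,v)\<in>L. (br a u, br b v) \<in> L}"

end

theory Submission
  imports Defs
begin

text \<open>The form \<open><a, b> = <(r_+ - r_-)\<^sup>-\<^sup>1 a, b>\<close> is symmetric, nondegenerate and
  ad-invariant; through it \<open>r_\<plusminus>\<close> become \<open>R_\<plusminus> = r\<^sup>\<flat>_\<plusminus>\<close> with \<open>R_+ - R_- = id\<close> and
  \<open>R_+\<^sup>* = -R_-\<close>, and the CYBE says that \<open>R_\<plusminus>\<close> are homomorphisms from the r-bracket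
  \<open>[p, q]_r = [R_+ p, q] + [p, R_- q]\<close>.  Then \<open>l_r = {(p, q). R_- p = R_+ q}\<close>,
  \<open>f_+\<^sup>\<bottom> = ker R_-\<close>, \<open>f_-\<^sup>\<bottom> = ker R_+\<close>, and \<open>\<delta>_r(x) = 0\<close> iff \<open>ad_x\<close> commutes with \<open>R_+\<close>.
  So each of (i)-(iii) amounts to \<open>R_-[a, R_+ u] = 0\<close> for \<open>a \<in> m_+\<close> and \<open>R_+[b, R_- u] = 0\<close>
  for \<open>b \<in> m_-\<close>.  For (iii) the key point is that r-brackets are orthogonal to every \<open>y\<close>
  whose \<open>ad_y\<close> commutes with \<open>R_+\<close>, while \<open>R_- R_+\<close> is self-adjoint with image in
  \<open>t = m_+ \<inter> m_-\<close>; hence \<open>R_- R_+\<close> kills all r-brackets.\<close>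

lemma module_hom_sum_list:
  "module_hom s1 s2 f \<Longrightarrow> f (\<Sum>x\<leftarrow>xs. g x) = (\<Sum>x\<leftarrow>xs. f (g x))"
  by (induction xs) (simp_all add: module_hom.add module_hom.zero)

lemma sum_list_ad2:
  "(\<Sum>(a,b)\<leftarrow>ad2 br x t. f a b) = (\<Sum>(a,b)\<leftarrow>t. f (br x a) b + f a (br x b))"
  unfolding ad2_def by (induction t) (auto simp: add.assoc)

lemma sum_list_flip21: "(\<Sum>(a,b)\<leftarrow>flip21 t. f a b) = (\<Sum>(a,b)\<leftarrow>t. f b a)"
  unfolding flip21_def by (induction t) auto

lemma sum_list_cybe_term:
  "(\<Sum>(a,b,c)\<leftarrow>concat (map (\<lambda>(xi,yi). concat (map (\<lambda>(xj,yj).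
        [(br xi xj, yi, yj), (xi, br yi xj, yj), (xi, xj, br yi yj)]) s)) t).
      (\<phi> a * \<psi> b * \<chi> c :: 'k::comm_ring))
   = (\<Sum>(xi,yi)\<leftarrow>t. \<psi> yi * (\<Sum>(xj,yj)\<leftarrow>s. \<chi> yj * \<phi> (br xi xj))
       + (\<Sum>(xj,yj)\<leftarrow>s. \<chi> yj * \<psi> (br yi xj)) * \<phi> xi
       + (\<Sum>(xj,yj)\<leftarrow>s. \<psi> xj * \<chi> (br yi yj)) * \<phi> xi)"
proof -
  have inner: "(\<Sum>(a,b,c)\<leftarrow>concat (map (\<lambda>(xj,yj).
        [(br xi xj, yi, yj), (xi, br yi xj, yj), (xi, xj, br yi yj)]) s). \<phi> a * \<psi> b * \<chi> c)
     = \<psi> yi * (\<Sum>(xj,yj)\<leftarrow>s. \<chi> yj * \<phi> (br xi xj))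
       + (\<Sum>(xj,yj)\<leftarrow>s. \<chi> yj * \<psi> (br yi xj)) * \<phi> xi
       + (\<Sum>(xj,yj)\<leftarrow>s. \<psi> xj * \<chi> (br yi yj)) * \<phi> xi" for xi yi
    by (induction s) (auto simp: algebra_simps)
  show ?thesis by (induction t) (auto simp: inner)
qed

locale factorizable_r_matrix =
  fixes sc :: "'k::field \<Rightarrow> 'g::ab_group_add \<Rightarrow> 'g"
    and br :: "'g \<Rightarrow> 'g \<Rightarrow> 'g"
    and r :: "('g \<times> 'g) list"
  assumes lie: "lie_algebra sc br"
    and factorizable: "factorizable_qt sc br r"
begin

abbreviation "D \<equiv> r_diff sc r"
abbreviation "J \<equiv> r_diff_inv sc r"
abbreviation "rp \<equiv> r_plus sc r"
abbreviation "rm \<equiv> r_minus sc r"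
abbreviation "Rp \<equiv> r_flat_plus sc r"
abbreviation "Rm \<equiv> r_flat_minus sc r"

lemma module_sc: "module sc"
  using lie by (simp add: lie_algebra_def module_iff_vector_space)

lemma bracket_hom_left: "module_hom sc sc (\<lambda>x. br x y)"
  using lie by (simp add: lie_algebra_def module_hom_linearI)

lemma bracket_hom_right: "module_hom sc sc (br x)"
  using lie by (simp add: lie_algebra_def module_hom_linearI)

lemmas bracket_add_left = module_hom.add[OF bracket_hom_left]
  and bracket_diff_left = module_hom.diff[OF bracket_hom_left]
  and bracket_neg_left = module_hom.neg[OF bracket_hom_left]
  and bracket_zero_left = module_hom.zero[OF bracket_hom_left]
  and bracket_add_right = module_hom.add[OF bracket_hom_right]
  and bracket_diff_right = module_hom.diff[OF bracket_hom_right]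
  and bracket_neg_right = module_hom.neg[OF bracket_hom_right]

lemma bracket_antisym: "br a b = - br b a"
proof -
  have "br (a + b) (a + b) = 0" "br a a = 0" "br b b = 0"
    using lie by (auto simp: lie_algebra_def)
  then show ?thesis
    by (simp add: bracket_add_left bracket_add_right eq_neg_iff_add_eq_0 add.commute)
qed

lemma dual_hom: "\<phi> \<in> dual sc \<Longrightarrow> module_hom sc (*) \<phi>"
  by (simp add: dual_def module_hom_linearI)

lemmas dual_add = module_hom.add[OF dual_hom]
  and dual_scale = module_hom.scale[OF dual_hom]
  and dual_diff = module_hom.diff[OF dual_hom]
  and dual_neg = module_hom.neg[OF dual_hom]
  and dual_zero = module_hom.zero[OF dual_hom]

lemma dual_bracket_left: "\<phi> \<in> dual sc \<Longrightarrow> (\<lambda>y. \<phi> (br y x)) \<in> dual sc"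
  using Vector_Spaces.linear_compose[OF module_hom_iff_linear[THEN iffD1, OF bracket_hom_left]]
  by (simp add: dual_def o_def)

lemma dual_bracket_right: "\<phi> \<in> dual sc \<Longrightarrow> (\<lambda>y. \<phi> (br x y)) \<in> dual sc"
  using Vector_Spaces.linear_compose[OF module_hom_iff_linear[THEN iffD1, OF bracket_hom_right]]
  by (simp add: dual_def o_def)

lemma pair_r_plus: "\<eta> \<in> dual sc \<Longrightarrow> \<eta> (rp \<xi>) = (\<Sum>(x,y)\<leftarrow>r. \<xi> x * \<eta> y)"
  unfolding r_plus_def by (simp add: module_hom_sum_list[OF dual_hom] split_def dual_scale)

lemma pair_r_minus: "\<eta> \<in> dual sc \<Longrightarrow> \<eta> (rm \<xi>) = - (\<Sum>(x,y)\<leftarrow>r. \<xi> y * \<eta> x)"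
  unfolding r_minus_def by (simp add: dual_neg module_hom_sum_list[OF dual_hom] split_def dual_scale)

lemma pair_r_diff: "\<eta> \<in> dual sc \<Longrightarrow> \<eta> (D \<xi>) = (\<Sum>(x,y)\<leftarrow>r. \<xi> x * \<eta> y + \<xi> y * \<eta> x)"
  unfolding r_diff_def by (simp add: dual_diff pair_r_plus pair_r_minus sum_list_addf split_def)

lemma r_diff_bij: "bij_betw D (dual sc) UNIV"
  using factorizable by (simp add: factorizable_qt_def)

lemma r_diff_inv_in_dual: "J v \<in> dual sc"
  unfolding r_diff_inv_def using r_diff_bij by (metis UNIV_I bij_betw_imp_surj_on inv_into_into)

lemma r_diff_r_diff_inv: "D (J v) = v"
  unfolding r_diff_inv_def using r_diff_bij by (simp add: bij_betw_inv_into_right)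

lemma r_diff_inv_r_diff: "\<phi> \<in> dual sc \<Longrightarrow> J (D \<phi>) = \<phi>"
  unfolding r_diff_inv_def using r_diff_bij by (simp add: bij_betw_inv_into_left)

lemma r_diff_zero: "D (\<lambda>x. 0) = 0"
  using module_sc by (simp add: r_diff_def r_plus_def r_minus_def split_def module.scale_zero_left)

lemma dual_eq_range: "dual sc = range J"
  by (auto intro: r_diff_inv_in_dual) (metis r_diff_inv_r_diff rangeI)

lemma form_sym: "J a b = J b a"
proof -
  have "J a b = J a (D (J b))" by (simp add: r_diff_r_diff_inv)
  also have "\<dots> = (\<Sum>(x,y)\<leftarrow>r. J b x * J a y + J b y * J a x)"
    by (rule pair_r_diff[OF r_diff_inv_in_dual])
  also have "\<dots> = (\<Sum>(x,y)\<leftarrow>r. J a x * J b y + J a y * J b x)" by (simp add: ac_simps)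
  also have "\<dots> = J b (D (J a))" by (rule pair_r_diff[OF r_diff_inv_in_dual, symmetric])
  finally show ?thesis by (simp add: r_diff_r_diff_inv)
qed

lemma form_nondegenerate:
  assumes "\<And>x. J x v = 0"
  shows "v = 0"
proof -
  have "J v = (\<lambda>x. 0)" using assms form_sym by auto
  then show ?thesis using r_diff_r_diff_inv[of v] r_diff_zero by simp
qed

lemma dual_separates: "(\<And>\<phi>. \<phi> \<in> dual sc \<Longrightarrow> \<phi> v = 0) \<Longrightarrow> v = 0"
  using form_nondegenerate r_diff_inv_in_dual by blast

lemma form_add_left: "J (a + b) = (\<lambda>x. J a x + J b x)"
  by (metis form_sym dual_add[OF r_diff_inv_in_dual])

lemma r_flat_plus_minus: "Rp v - Rm v = v"
  using r_diff_r_diff_inv[of v] by (simp add: r_diff_def r_flat_plus_def r_flat_minus_def)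

lemma r_flat_plus_eq: "Rp v = v + Rm v"
  using r_flat_plus_minus[of v] by (simp add: algebra_simps)

lemma r_flat_minus_eq: "Rm v = Rp v - v"
  using r_flat_plus_minus[of v] by (simp add: algebra_simps)

lemma r_flat_plus_additive: "additive Rp"
proof
  fix a b
  have "rp (\<lambda>x. J a x + J b x) = rp (J a) + rp (J b)"
    unfolding r_plus_def
    by (simp add: module.scale_left_distrib[OF module_sc] sum_list_addf split_def)
  then show "Rp (a + b) = Rp a + Rp b"
    by (simp add: r_flat_plus_def form_add_left)
qed

lemma r_flat_minus_additive: "additive Rm"
  by standard (simp add: r_flat_minus_eq additive.add[OF r_flat_plus_additive] algebra_simps)

lemmas r_flat_plus_diff = additive.diff[OF r_flat_plus_additive]
  and r_flat_plus_zero = additive.zero[OF r_flat_plus_additive]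
  and r_flat_minus_add = additive.add[OF r_flat_minus_additive]
  and r_flat_minus_diff = additive.diff[OF r_flat_minus_additive]
  and r_flat_minus_zero = additive.zero[OF r_flat_minus_additive]

lemma r_flat_commute: "Rp (Rm v) = Rm (Rp v)"
  by (simp add: r_flat_plus_eq[of v] r_flat_minus_add r_flat_plus_eq[of "Rm v"])

lemma form_r_flat_plus: "J c (Rp u) = - J u (Rm c)"
  using pair_r_plus[OF r_diff_inv_in_dual, of c "J u"] pair_r_minus[OF r_diff_inv_in_dual, of u "J c"]
  by (simp add: r_flat_plus_def r_flat_minus_def ac_simps)

lemma form_r_flat_minus: "J c (Rm u) = - J u (Rp c)"
  using form_r_flat_plus[of u c] by simp

lemma form_neg_left: "J (- a) = (\<lambda>x. - J a x)"
  by (metis form_sym dual_neg[OF r_diff_inv_in_dual])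

text \<open>The ad-invariance of \<open>r + r\<^sup>2\<^sup>1\<close>, read through \<open>D\<close>.\<close>

lemma r_diff_bracket:
  assumes \<phi>: "\<phi> \<in> dual sc"
  shows "D (\<lambda>y. \<phi> (br x y)) = - br x (D \<phi>)"
proof -
  have "D (\<lambda>y. \<phi> (br x y)) + br x (D \<phi>) = 0"
  proof (rule dual_separates)
    fix \<psi> assume \<psi>: "\<psi> \<in> dual sc"
    have "tensor2_zero sc (ad2 br x (r @ flip21 r))"
      using factorizable by (simp add: factorizable_qt_def)
    then have "(\<Sum>(a,b)\<leftarrow>ad2 br x r @ ad2 br x (flip21 r). \<phi> a * \<psi> b) = 0"
      using \<phi> \<psi> by (simp add: tensor2_zero_def ad2_def)
    then have "(\<Sum>(a,b)\<leftarrow>r. \<phi> (br x a) * \<psi> b + \<phi> a * \<psi> (br x b))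
        + (\<Sum>(a,b)\<leftarrow>r. \<phi> (br x b) * \<psi> a + \<phi> b * \<psi> (br x a)) = 0"
      by (simp add: sum_list_ad2 sum_list_flip21)
    moreover have "\<psi> (D (\<lambda>y. \<phi> (br x y))) + \<psi> (br x (D \<phi>))
        = (\<Sum>(a,b)\<leftarrow>r. \<phi> (br x a) * \<psi> b + \<phi> a * \<psi> (br x b))
        + (\<Sum>(a,b)\<leftarrow>r. \<phi> (br x b) * \<psi> a + \<phi> b * \<psi> (br x a))"
      using pair_r_diff[OF \<psi>, of "\<lambda>y. \<phi> (br x y)"] pair_r_diff[OF dual_bracket_right[OF \<psi>], of x \<phi>]
      by (simp add: sum_list_addf split_def ac_simps)
    ultimately show "\<psi> (D (\<lambda>y. \<phi> (br x y)) + br x (D \<phi>)) = 0"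
      using \<psi> by (simp add: dual_add)
  qed
  then show ?thesis by (simp add: eq_neg_iff_add_eq_0)
qed

lemma form_bracket: "J (br x a) = (\<lambda>y. - J a (br x y))"
proof -
  have "br x a = - D (\<lambda>y. J a (br x y))"
    using r_diff_bracket[OF r_diff_inv_in_dual, of a x] by (simp add: r_diff_r_diff_inv)
  then show ?thesis
    by (simp add: form_neg_left r_diff_inv_r_diff[OF dual_bracket_right[OF r_diff_inv_in_dual]])
qed

lemma pair_ad2_r:
  assumes "\<phi> \<in> dual sc" "\<psi> \<in> dual sc"
  shows "(\<Sum>(a,b)\<leftarrow>ad2 br x r. \<phi> a * \<psi> b) = \<psi> (rp (\<lambda>y. \<phi> (br x y)) + br x (rp \<phi>))"
  unfolding sum_list_ad2
  using pair_r_plus[OF assms(2), of "\<lambda>y. \<phi> (br x y)"]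
    pair_r_plus[OF dual_bracket_right[OF assms(2)], of x \<phi>]
  by (simp add: assms(2) dual_add sum_list_addf split_def)

lemma delta_zero_iff_dual:
  "delta_zero sc br r x \<longleftrightarrow> (\<forall>\<phi>\<in>dual sc. rp (\<lambda>y. \<phi> (br x y)) + br x (rp \<phi>) = 0)"
  unfolding delta_zero_def tensor2_zero_def
  by (auto simp: pair_ad2_r dual_zero intro: dual_separates)

definition ad_commutes_r_flat :: "'g \<Rightarrow> bool" where
  "ad_commutes_r_flat x \<longleftrightarrow> (\<forall>p. br x (Rp p) = Rp (br x p))"

lemma delta_zero_iff_ad_commutes: "delta_zero sc br r x \<longleftrightarrow> ad_commutes_r_flat x"
proof -
  have "rp (\<lambda>y. J p (br x y)) = - Rp (br x p)" for p
  proof -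
    have "(\<lambda>y. J p (br x y)) = J (- br x p)" by (simp add: form_neg_left form_bracket)
    then show ?thesis
      using additive.minus[OF r_flat_plus_additive, of "br x p"] by (simp add: r_flat_plus_def)
  qed
  then have "rp (\<lambda>y. J p (br x y)) + br x (rp (J p)) = 0 \<longleftrightarrow> br x (Rp p) = Rp (br x p)" for p
    by (auto simp: r_flat_plus_def)
  then show ?thesis
    unfolding delta_zero_iff_dual dual_eq_range ad_commutes_r_flat_def by simp
qed

lemma form_bracket_swap: "(\<lambda>y. J p (br y w)) = J (br w p)"
proof
  fix y show "J p (br y w) = J (br w p) y"
    using bracket_antisym[of y w] by (simp add: form_bracket dual_neg[OF r_diff_inv_in_dual])
qed

text \<open>Pairing both sides with a third functional gives exactly the CYBE.\<close>

lemma r_minus_bracket: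
  assumes \<psi>: "\<psi> \<in> dual sc" and \<chi>: "\<chi> \<in> dual sc"
  shows "br (rm \<psi>) (rm \<chi>) = rm (\<lambda>y. \<psi> (br y (- rm \<chi>))) + rm (\<lambda>y. \<chi> (br y (rp \<psi>)))"
proof -
  have "br (rm \<psi>) (rm \<chi>) - rm (\<lambda>y. \<psi> (br y (- rm \<chi>))) - rm (\<lambda>y. \<chi> (br y (rp \<psi>))) = 0"
  proof (rule dual_separates)
    fix \<phi> assume \<phi>: "\<phi> \<in> dual sc"
    have "cybe sc br r" using factorizable by (simp add: factorizable_qt_def)
    then have "(\<Sum>(xi,yi)\<leftarrow>r. \<psi> yi * (\<Sum>(xj,yj)\<leftarrow>r. \<chi> yj * \<phi> (br xi xj))
       + (\<Sum>(xj,yj)\<leftarrow>r. \<chi> yj * \<psi> (br yi xj)) * \<phi> xi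
       + (\<Sum>(xj,yj)\<leftarrow>r. \<psi> xj * \<chi> (br yi yj)) * \<phi> xi) = 0"
      using \<phi> \<psi> \<chi> by (simp add: cybe_def tensor3_zero_def sum_list_cybe_term)
    moreover have "\<phi> (br (rm \<psi>) (rm \<chi>))
        = (\<Sum>(xi,yi)\<leftarrow>r. \<psi> yi * (\<Sum>(xj,yj)\<leftarrow>r. \<chi> yj * \<phi> (br xi xj)))"
    proof -
      have "\<phi> (br (rm \<psi>) (rm \<chi>)) = - (\<Sum>(xi,yi)\<leftarrow>r. \<psi> yi * \<phi> (br xi (rm \<chi>)))"
        by (rule pair_r_minus[OF dual_bracket_left[OF \<phi>]])
      then show ?thesis
        using pair_r_minus[OF dual_bracket_right[OF \<phi>]]
        by (simp add: split_def uminus_sum_list_map[symmetric, unfolded comp_def])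
    qed
    moreover have "\<phi> (rm (\<lambda>y. \<psi> (br y (- rm \<chi>))))
        = - (\<Sum>(xi,yi)\<leftarrow>r. (\<Sum>(xj,yj)\<leftarrow>r. \<chi> yj * \<psi> (br yi xj)) * \<phi> xi)"
      using \<phi> \<psi> pair_r_minus[OF dual_bracket_right[OF \<psi>]]
      by (simp add: pair_r_minus bracket_neg_right dual_neg)
    moreover have "\<phi> (rm (\<lambda>y. \<chi> (br y (rp \<psi>))))
        = - (\<Sum>(xi,yi)\<leftarrow>r. (\<Sum>(xj,yj)\<leftarrow>r. \<psi> xj * \<chi> (br yi yj)) * \<phi> xi)"
      using \<phi> \<chi> pair_r_plus[OF dual_bracket_right[OF \<chi>]] by (simp add: pair_r_minus)
    ultimately show "\<phi> (br (rm \<psi>) (rm \<chi>) - rm (\<lambda>y. \<psi> (br y (- rm \<chi>)))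
        - rm (\<lambda>y. \<chi> (br y (rp \<psi>)))) = 0"
      using \<phi> by (simp add: dual_diff sum_list_addf split_def)
  qed
  then show ?thesis by (simp add: algebra_simps)
qed

definition r_bracket :: "'g \<Rightarrow> 'g \<Rightarrow> 'g" where
  "r_bracket p q = br (Rp p) q + br p (Rm q)"

lemma r_flat_minus_hom: "br (Rm p) (Rm q) = Rm (r_bracket p q)"
proof -
  have "rm (\<lambda>y. J p (br y (- Rm q))) = Rm (br p (Rm q))"
    using bracket_antisym[of p "Rm q"]
    by (simp add: form_bracket_swap r_flat_minus_def bracket_neg_left)
  moreover have "rm (\<lambda>y. J q (br y (Rp p))) = Rm (br (Rp p) q)"
    by (simp add: form_bracket_swap r_flat_minus_def)
  ultimately show ?thesis
    using r_minus_bracket[OF r_diff_inv_in_dual r_diff_inv_in_dual, of p q]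
    by (simp add: r_flat_minus_def[symmetric] r_flat_plus_def[symmetric] r_bracket_def
        r_flat_minus_add add.commute)
qed

lemma r_flat_plus_hom: "br (Rp p) (Rp q) = Rp (r_bracket p q)"
proof -
  have "br (Rp p) (Rp q) = br (Rm p) (Rm q) + br (Rm p) q + br p (Rm q) + br p q"
    by (simp add: r_flat_plus_eq bracket_add_left bracket_add_right algebra_simps)
  also have "\<dots> = Rm (r_bracket p q) + r_bracket p q"
    by (simp add: r_flat_minus_hom r_bracket_def r_flat_plus_eq[of p] bracket_add_left algebra_simps)
  finally show ?thesis by (simp add: r_flat_plus_eq[of "r_bracket p q"] add.commute)
qed

lemma l_r_iff: "(p, q) \<in> l_r sc r \<longleftrightarrow> Rm p = Rp q"
proof
  assume "(p, q) \<in> l_r sc r"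
  then show "Rm p = Rp q" by (auto simp: l_r_def r_flat_commute)
next
  assume pq: "Rm p = Rp q"
  have "p = Rp (p - q)"
    using pq by (simp add: r_flat_plus_diff r_flat_plus_eq[of p])
  moreover have "q = Rm (p - q)"
    using pq by (simp add: r_flat_minus_diff r_flat_plus_minus)
  ultimately show "(p, q) \<in> l_r sc r" unfolding l_r_def by blast
qed

lemma f_plus_eq_range: "f_plus sc r = range Rp"
  by (simp add: f_plus_def dual_eq_range image_image r_flat_plus_def)

lemma f_minus_eq_range: "f_minus sc r = range Rm"
  by (simp add: f_minus_def dual_eq_range image_image r_flat_minus_def)

lemma perp_f_plus_iff: "c \<in> perp sc r (f_plus sc r) \<longleftrightarrow> Rm c = 0"
  using form_nondegenerate[of "Rm c"]
  by (auto simp: perp_def f_plus_eq_range form_g_def form_r_flat_plus dual_zero[OF r_diff_inv_in_dual])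

lemma perp_f_minus_iff: "c \<in> perp sc r (f_minus sc r) \<longleftrightarrow> Rp c = 0"
  using form_nondegenerate[of "Rp c"]
  by (auto simp: perp_def f_minus_eq_range form_g_def form_r_flat_minus dual_zero[OF r_diff_inv_in_dual])

lemma normalizer2_l_r_iff:
  "(a, b) \<in> normalizer2 br (l_r sc r) \<longleftrightarrow> (\<forall>u. Rm (br a (Rp u)) = Rp (br b (Rm u)))"
proof -
  have "(a, b) \<in> normalizer2 br (l_r sc r) \<longleftrightarrow> (\<forall>u. (br a (Rp u), br b (Rm u)) \<in> l_r sc r)"
    unfolding normalizer2_def by (auto simp: l_r_def)
  then show ?thesis by (simp add: l_r_iff)
qed

lemma ad_commutes_r_flat_minus: "ad_commutes_r_flat x \<Longrightarrow> br x (Rm p) = Rm (br x p)"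
  by (simp add: ad_commutes_r_flat_def r_flat_minus_eq[of p] r_flat_minus_eq[of "br x p"]
      bracket_diff_right)

lemma r_flat_minus_plus_bracket_eq_0:
  assumes x: "ad_commutes_r_flat x" and mx: "ad_commutes_r_flat (Rm x)"
  shows "Rm (Rp (br x u)) = 0"
proof -
  have "Rm (br (Rm x) u) = br (Rm x) (Rm u)" using ad_commutes_r_flat_minus[OF mx] by simp
  also have "\<dots> = Rm (br (Rp x) u + br x (Rm u))" by (simp add: r_flat_minus_hom r_bracket_def)
  also have "\<dots> = Rm (br x u) + Rm (br (Rm x) u) + Rm (Rm (br x u))"
    using ad_commutes_r_flat_minus[OF x]
    by (simp add: r_flat_plus_eq[of x] bracket_add_left r_flat_minus_add)
  finally have "Rm (br x u) + Rm (Rm (br x u)) = 0" by (simp add: algebra_simps)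
  then show ?thesis by (simp add: r_flat_plus_eq[of "br x u"] r_flat_minus_add)
qed

lemma form_r_bracket_ad_commutes:
  assumes y: "ad_commutes_r_flat y"
  shows "J (r_bracket a u) y = 0"
proof -
  have "J y (br (Rp a) u) = - J (br y a) (Rm u)"
  proof -
    have "J y (br (Rp a) u) = - J (br (Rp a) y) u" by (simp add: form_bracket)
    also have "br (Rp a) y = - Rp (br y a)"
      using bracket_antisym[of "Rp a" y] y by (simp add: ad_commutes_r_flat_def)
    finally show ?thesis
      by (simp add: form_neg_left form_sym[of "Rp (br y a)"] form_r_flat_plus)
  qed
  moreover have "J y (br a (Rm u)) = J (br y a) (Rm u)"
  proof -
    have "J (br a y) (Rm u) = - J y (br a (Rm u))" by (simp add: form_bracket)
    then show ?thesis using bracket_antisym[of a y] by (simp add: form_neg_left)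
  qed
  ultimately show ?thesis
    by (simp add: r_bracket_def form_sym[of _ y] dual_add[OF r_diff_inv_in_dual])
qed

lemma form_r_flat_minus_plus_sym: "J v (Rm (Rp z)) = J z (Rm (Rp v))"
proof -
  have "J v (Rm (Rp z)) = - J (Rp z) (Rp v)" by (rule form_r_flat_minus)
  also have "J (Rp z) (Rp v) = J (Rp v) (Rp z)" by (rule form_sym)
  also have "\<dots> = - J z (Rm (Rp v))" by (rule form_r_flat_plus)
  finally show ?thesis by simp
qed

lemma r_flat_minus_plus_r_bracket_eq_0:
  assumes "\<And>v. ad_commutes_r_flat (Rm (Rp v))"
  shows "Rm (Rp (r_bracket a u)) = 0"
proof (rule form_nondegenerate)
  fix v
  show "J v (Rm (Rp (r_bracket a u))) = 0"
    using form_r_bracket_ad_commutes[OF assms, of a u v]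
      form_r_flat_minus_plus_sym[of v "r_bracket a u"]
    by simp
qed

end

locale r_matrix_subalgebras = factorizable_r_matrix +
  fixes Mp Mm
  assumes subalgebra_plus: "lie_subalgebra sc br Mp"
    and subalgebra_minus: "lie_subalgebra sc br Mm"
    and l_r_subset: "l_r sc r \<subseteq> Mp \<times> Mm"
begin

lemma r_flat_plus_mem: "Rp v \<in> Mp" and r_flat_minus_mem: "Rm v \<in> Mm"
  using l_r_subset l_r_iff[of "Rp v" "Rm v"] r_flat_commute by auto

lemma zero_mem: "0 \<in> Mp" "0 \<in> Mm"
  using subalgebra_plus subalgebra_minus module.subspace_0[OF module_sc]
  by (auto simp: lie_subalgebra_def)

lemma r_flat_minus_mem_inter:
  assumes "a \<in> Mp"
  shows "Rm a \<in> Mp \<inter> Mm"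
proof -
  have "Rp a - a \<in> Mp"
    using subalgebra_plus assms module.subspace_diff[OF module_sc] r_flat_plus_mem
    by (auto simp: lie_subalgebra_def)
  then show ?thesis using r_flat_minus_mem by (simp add: r_flat_minus_eq[symmetric])
qed

lemma r_flat_plus_mem_inter:
  assumes "b \<in> Mm"
  shows "Rp b \<in> Mp \<inter> Mm"
proof -
  have "b + Rm b \<in> Mm"
    using subalgebra_minus assms module.subspace_add[OF module_sc] r_flat_minus_mem
    by (auto simp: lie_subalgebra_def)
  then show ?thesis using r_flat_plus_mem by (simp add: r_flat_plus_eq[symmetric])
qed

definition brackets_in_kernels :: bool where
  "brackets_in_kernels \<longleftrightarrow>
     (\<forall>a\<in>Mp. \<forall>u. Rm (br a (Rp u)) = 0) \<and> (\<forall>b\<in>Mm. \<forall>u. Rp (br b (Rm u)) = 0)"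

lemma normalizer_iff_brackets_in_kernels:
  "Mp \<times> Mm \<subseteq> normalizer2 br (l_r sc r) \<longleftrightarrow> brackets_in_kernels"
proof
  assume N: "Mp \<times> Mm \<subseteq> normalizer2 br (l_r sc r)"
  have "Rm (br a (Rp u)) = Rp (br b (Rm u))" if "a \<in> Mp" "b \<in> Mm" for a b u
    using that N normalizer2_l_r_iff by blast
  from this[OF _ zero_mem(2)] this[OF zero_mem(1)] show brackets_in_kernels
    by (simp add: brackets_in_kernels_def bracket_zero_left r_flat_plus_zero r_flat_minus_zero)
next
  assume brackets_in_kernels
  then show "Mp \<times> Mm \<subseteq> normalizer2 br (l_r sc r)"
    by (auto simp: brackets_in_kernels_def normalizer2_l_r_iff)
qed

lemma perp_iff_brackets_in_kernels:
  "(\<forall>a\<in>Mp. \<forall>b\<in>f_plus sc r. br a b \<in> perp sc r (f_plus sc r))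
     \<and> (\<forall>a\<in>Mm. \<forall>b\<in>f_minus sc r. br a b \<in> perp sc r (f_minus sc r))
   \<longleftrightarrow> brackets_in_kernels"
  unfolding perp_f_plus_iff perp_f_minus_iff
  by (simp add: brackets_in_kernels_def f_plus_eq_range f_minus_eq_range)

lemma r_flat_minus_plus_r_bracket_eq_0_if_inter_commutes:
  assumes "\<And>x. x \<in> Mp \<inter> Mm \<Longrightarrow> ad_commutes_r_flat x"
  shows "Rm (Rp (r_bracket a u)) = 0"
  using r_flat_minus_plus_r_bracket_eq_0 assms r_flat_minus_mem_inter r_flat_plus_mem by blast

lemma r_flat_minus_bracket_eq_0:
  assumes commutes: "\<And>x. x \<in> Mp \<inter> Mm \<Longrightarrow> ad_commutes_r_flat x" and a: "a \<in> Mp"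
  shows "Rm (br a (Rp u)) = 0"
proof -
  have t: "Rm a \<in> Mp \<inter> Mm" "Rm (Rm a) \<in> Mp \<inter> Mm"
    using a r_flat_minus_mem_inter by auto
  have "Rm (br a (Rp u)) = Rm (br (Rp a) (Rp u)) - Rm (br (Rm a) (Rp u))"
    by (metis r_flat_plus_minus bracket_diff_left r_flat_minus_diff)
  also have "\<dots> = Rm (Rp (r_bracket a u)) - Rm (Rp (br (Rm a) u))"
    using commutes[OF t(1)] by (simp add: r_flat_plus_hom ad_commutes_r_flat_def)
  also have "\<dots> = 0"
    using r_flat_minus_plus_r_bracket_eq_0_if_inter_commutes[OF commutes]
      r_flat_minus_plus_bracket_eq_0[OF commutes[OF t(1)] commutes[OF t(2)]]
    by simp
  finally show ?thesis .
qed

lemma r_flat_plus_bracket_eq_0: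
  assumes commutes: "\<And>x. x \<in> Mp \<inter> Mm \<Longrightarrow> ad_commutes_r_flat x" and b: "b \<in> Mm"
  shows "Rp (br b (Rm u)) = 0"
proof -
  have t: "Rp b \<in> Mp \<inter> Mm" "Rm (Rp b) \<in> Mp \<inter> Mm"
    using b r_flat_plus_mem_inter r_flat_minus_mem_inter by auto
  have "Rp (br b (Rm u)) = Rp (br (Rp b) (Rm u)) - Rp (br (Rm b) (Rm u))"
    by (metis r_flat_plus_minus bracket_diff_left r_flat_plus_diff)
  also have "\<dots> = Rm (Rp (br (Rp b) u)) - Rm (Rp (r_bracket b u))"
    using ad_commutes_r_flat_minus[OF commutes[OF t(1)]]
    by (simp add: r_flat_minus_hom r_flat_commute)
  also have "\<dots> = 0"
    using r_flat_minus_plus_r_bracket_eq_0_if_inter_commutes[OF commutes]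
      r_flat_minus_plus_bracket_eq_0[OF commutes[OF t(1)] commutes[OF t(2)]]
    by simp
  finally show ?thesis .
qed

lemma brackets_in_kernels_if_delta_zero:
  assumes "\<forall>x\<in>Mp \<inter> Mm. delta_zero sc br r x"
  shows brackets_in_kernels
  using assms r_flat_minus_bracket_eq_0 r_flat_plus_bracket_eq_0
  by (simp add: brackets_in_kernels_def delta_zero_iff_ad_commutes)

lemma delta_zero_if_brackets_in_kernels:
  assumes brackets_in_kernels and x: "x \<in> Mp \<inter> Mm"
  shows "delta_zero sc br r x"
  unfolding delta_zero_iff_ad_commutes ad_commutes_r_flat_def
proof
  fix p
  have "Rp (br x (Rm p)) = 0" "Rm (br x (Rp p)) = 0"
    using assms by (auto simp: brackets_in_kernels_def)
  then have "Rp (br x p) = Rp (br x (Rp p))"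
    by (metis r_flat_plus_minus bracket_diff_right r_flat_plus_diff diff_zero)
  also have "\<dots> = br x (Rp p)"
    using \<open>Rm (br x (Rp p)) = 0\<close> by (simp add: r_flat_plus_eq)
  finally show "br x (Rp p) = Rp (br x p)" ..
qed

end

theorem lemma4p11:
  fixes sc :: "'k::real_normed_field \<Rightarrow> 'g::ab_group_add \<Rightarrow> 'g"
    and br :: "'g \<Rightarrow> 'g \<Rightarrow> 'g"
    and r :: "('g \<times> 'g) list"
    and Mp Mm :: "'g set"
  assumes "lie_algebra sc br"
    and "factorizable_qt sc br r"
    and "lie_subalgebra sc br Mp" and "lie_subalgebra sc br Mm"
    and "l_r sc r \<subseteq> Mp \<times> Mm"
  shows "((Mp \<times> Mm \<subseteq> normalizer2 br (l_r sc r))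
           \<longleftrightarrow> ((\<forall>a\<in>Mp. \<forall>b\<in>f_plus sc r. br a b \<in> perp sc r (f_plus sc r))
                \<and> (\<forall>a\<in>Mm. \<forall>b\<in>f_minus sc r. br a b \<in> perp sc r (f_minus sc r))))
         \<and> ((Mp \<times> Mm \<subseteq> normalizer2 br (l_r sc r))
           \<longleftrightarrow> (\<forall>x\<in>Mp \<inter> Mm. delta_zero sc br r x))"
proof -
  interpret r_matrix_subalgebras sc br r Mp Mm
    using assms by unfold_locales
  show ?thesis
    using normalizer_iff_brackets_in_kernels perp_iff_brackets_in_kernels
      brackets_in_kernels_if_delta_zero delta_zero_if_brackets_in_kernels
    by blast
qed

end
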